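(* In the setting described in the context, with initialization parameters $R=v=\frac{1}{\sqrt{2k}}$ (i.e. second layer $\mathbf{v}=(v,\dots,v,-v,\dots,-v)$ with $v=1/\sqrt{2k}$ and all rows of $W_0$ of norm at most $1/\sqrt{2k}$), SGD converges to a global minimum of $L_S$ after performing at most $$M_k=\frac{\|\mathbf{w}^*\|^2}{\alpha^2}+O\!\left(\frac{\|\mathbf{w}^*\|^2}{\min\{\eta,\sqrt{\eta}\}}\right)$$ non-zero updates, where the implied constant depends only on $\alpha$ (in particular not on $k$).
   Context: Data: $S=\{(\mathbf{x}_1,y_1),\dots,(\mathbf{x}_n,y_n)\}$ with $\|\mathbf{x}_i\|\le1$, $y_i\in\{\pm1\}$, and $\mathbf{w}^*\in\mathbb{R}^d$ with $y_i\langle\mathbf{w}^*,\mathbf{x}_i\rangle\ge1$ for all $i$ (so $\|\mathbf{w}^*\|\ge1$). Network $N_W(\mathbf{x})=\mathbf{v}^\top\sigma(W\mathbf{x})$, $W\in\mathbb{R}^{2k\times d}$, $\sigma(z)=\max\{\alpha z,z\}$ with $0<\alpha<1$, fixed $\mathbf{v}=(v,\dots,v,-v,\dots,-v)\in\mathbb{R}^{2k}$. Loss $L_S(W)=\frac1n\sum_i\max\{1-y_iN_W(\mathbf{x}_i),0\}$. SGD: batch size 1, constant learning rate $\eta>0$, only $W$ is updated; at each iteration an example $(\mathbf{x}_t,y_t)\in S$ is picked; if $y_tN_{W_{t-1}}(\mathbf{x}_t)\ge1$ nothing changes, otherwise the $i$-th row ($i\le k$) gets $+\eta v p y_t\mathbf{x}_t$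 and the $(k+i)$-th row gets $-\eta v q y_t\mathbf{x}_t$, where $p$ (resp. $q$) equals $1$ if the row's inner product with $\mathbf{x}_t$ is $\ge0$ and $\alpha$ otherwise. Such an update is called non-zero. *)

theory Defs
  imports Complex_Main
begin

text \<open>Vectors in R^d are represented as functions nat => real; only coordinates < d matter.
  A weight matrix W in R^(2k x d) is represented by its rows W j, j < 2k
  (rows j < k carry output weight +v, rows k <= j < 2k carry output weight -v).\<close>

definition ip :: "nat \<Rightarrow> (nat \<Rightarrow> real) \<Rightarrow> (nat \<Rightarrow> real) \<Rightarrow> real" where
  "ip d a b = (\<Sum>i<d. a i * b i)"

definition vnorm :: "nat \<Rightarrow> (nat \<Rightarrow> real) \<Rightarrow> real" where
  "vnorm d a = sqrt (ip d a a)"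

definition leaky :: "real \<Rightarrow> real \<Rightarrow> real" where
  "leaky \<alpha> z = max (\<alpha> * z) z"

definition net :: "real \<Rightarrow> nat \<Rightarrow> nat \<Rightarrow> real \<Rightarrow> (nat \<Rightarrow> nat \<Rightarrow> real) \<Rightarrow> (nat \<Rightarrow> real) \<Rightarrow> real" where
  "net \<alpha> d k v W x =
     (\<Sum>i<k. v * leaky \<alpha> (ip d (W i) x)) - (\<Sum>i<k. v * leaky \<alpha> (ip d (W (k + i)) x))"

definition loss :: "real \<Rightarrow> nat \<Rightarrow> nat \<Rightarrow> real \<Rightarrow> ((nat \<Rightarrow> real) \<times> real) list \<Rightarrow> (nat \<Rightarrow> nat \<Rightarrow> real) \<Rightarrow> real" where
  "loss \<alpha> d k v S W =
     (\<Sum>(x, y) \<leftarrow> S. max (1 - y * net \<alpha> d k v W x) 0) / real (length S)"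

definition sgd_step :: "real \<Rightarrow> nat \<Rightarrow> nat \<Rightarrow> real \<Rightarrow> real \<Rightarrow> (nat \<Rightarrow> nat \<Rightarrow> real) \<Rightarrow> (nat \<Rightarrow> real) \<times> real \<Rightarrow> (nat \<Rightarrow> nat \<Rightarrow> real)" where
  "sgd_step \<alpha> d k v \<eta> W xy =
     (let x = fst xy; y = snd xy in
      if y * net \<alpha> d k v W x \<ge> 1 then W
      else (\<lambda>j. if j < k then
                   (let p = (if ip d (W j) x \<ge> 0 then 1 else \<alpha>) in
                    (\<lambda>i. W j i + \<eta> * v * p * y * x i))
                 else if j < 2 * k then
                   (let q = (if ip d (W j) x \<ge> 0 then 1 else \<alpha>) in
                    (\<lambda>i. W j i - \<eta> * v * q * y * x i))
                 else W j))"

primrec sgd :: "real \<Rightarrow> nat \<Rightarrow> nat \<Rightarrow> real \<Rightarrow> real \<Rightarrow> ((nat \<Rightarrow> real) \<times> real) list \<Rightarrow> (nat \<Rightarrow> nat)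
    \<Rightarrow> (nat \<Rightarrow> nat \<Rightarrow> real) \<Rightarrow> nat \<Rightarrow> (nat \<Rightarrow> nat \<Rightarrow> real)" where
  "sgd \<alpha> d k v \<eta> S idx W0 0 = W0"
| "sgd \<alpha> d k v \<eta> S idx W0 (Suc t) = sgd_step \<alpha> d k v \<eta> (sgd \<alpha> d k v \<eta> S idx W0 t) (S ! idx t)"

definition nonzero_update :: "real \<Rightarrow> nat \<Rightarrow> nat \<Rightarrow> real \<Rightarrow> real \<Rightarrow> ((nat \<Rightarrow> real) \<times> real) list \<Rightarrow> (nat \<Rightarrow> nat)
    \<Rightarrow> (nat \<Rightarrow> nat \<Rightarrow> real) \<Rightarrow> nat \<Rightarrow> bool" where
  "nonzero_update \<alpha> d k v \<eta> S idx W0 t =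
     (snd (S ! idx t) * net \<alpha> d k v (sgd \<alpha> d k v \<eta> S idx W0 t) (fst (S ! idx t)) < 1)"

end

theory Submission
  imports Defs "HOL-Analysis.Convex"
begin

text \<open>This is the perceptron argument applied to the whole network. Let
  \<open>A(W) = \<Sum>\<^sub>j \<plusminus>\<langle>W\<^sub>j, w\<^sup>*\<rangle>\<close> (sign of the output weight of row \<open>j\<close>) and
  \<open>G(W) = \<Sum>\<^sub>j \<parallel>W\<^sub>j\<parallel>\<^sup>2\<close>. Every non-zero update increases \<open>A\<close> by at least \<open>\<eta>\<alpha>\<surd>(2k)\<close>,
  because each row moves by at least \<open>\<alpha>\<eta>v\<close> in the direction of \<open>w\<^sup>*\<close>, while it increases
  \<open>G\<close> by at most \<open>2\<eta> + \<eta>\<^sup>2\<close>, because the cross term equals \<open>2\<eta> y N\<^sub>W(x) < 2\<eta>\<close>.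
  Cauchy-Schwarz gives \<open>A(W) \<le> \<parallel>w\<^sup>*\<parallel>\<surd>(2k)\<surd>G(W)\<close>, so after \<open>M\<close> non-zero updates
  \<open>M\<eta>\<alpha> - \<parallel>w\<^sup>*\<parallel> \<le> \<parallel>w\<^sup>*\<parallel>\<surd>(1 + M(2\<eta> + \<eta>\<^sup>2))\<close>, and solving this quadratic inequality
  bounds \<open>M\<close> independently of \<open>k\<close>. Once no update changes \<open>W\<close> any more, every example that
  is still visited has margin at least 1, so the loss vanishes.\<close>

lemma ip_self_nonneg: "0 \<le> ip d a a"
  unfolding ip_def by (simp add: sum_nonneg)

lemma vnorm_nonneg: "0 \<le> vnorm d a"
  unfolding vnorm_def by (simp add: ip_self_nonneg)

lemma vnorm_square: "(vnorm d a)\<^sup>2 = ip d a a"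
  unfolding vnorm_def by (simp add: ip_self_nonneg)

lemma ip_commute: "ip d a b = ip d b a"
  unfolding ip_def by (simp add: mult.commute)

lemma abs_ip_le_vnorm: "\<bar>ip d a b\<bar> \<le> vnorm d a * vnorm d b"
proof -
  have "(ip d a b)\<^sup>2 \<le> ip d a a * ip d b b"
    using Cauchy_Schwarz_ineq_sum[of a b "{..<d}"] unfolding ip_def by (simp add: power2_eq_square)
  hence "sqrt ((ip d a b)\<^sup>2) \<le> sqrt (ip d a a * ip d b b)" by (rule real_sqrt_le_mono)
  thus ?thesis unfolding vnorm_def by (simp add: real_sqrt_mult)
qed

lemma ip_add_scaled_left: "ip d (\<lambda>i. a i + c * b i) e = ip d a e + c * ip d b e"
  unfolding ip_def by (simp add: algebra_simps sum.distrib sum_distrib_left)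

lemma ip_add_scaled_self:
  "ip d (\<lambda>i. a i + c * b i) (\<lambda>i. a i + c * b i) = ip d a a + 2 * c * ip d a b + c\<^sup>2 * ip d b b"
  unfolding ip_def by (simp add: algebra_simps power2_eq_square sum.distrib sum_distrib_left)

lemma sum_lessThan_double:
  fixes f :: "nat \<Rightarrow> 'a::comm_monoid_add"
  shows "(\<Sum>j<2*k. f j) = (\<Sum>j<k. f j) + (\<Sum>j<k. f (k + j))"
proof -
  have "(\<Sum>j<2*k. f j) = (\<Sum>j<k. f j) + (\<Sum>j\<in>{k..<k+k}. f j)"
    by (simp add: mult_2 lessThan_atLeast0 sum.atLeastLessThan_concat)
  also have "(\<Sum>j\<in>{k..<k+k}. f j) = (\<Sum>j<k. f (k + j))"
    using sum.shift_bounds_nat_ivl[of f 0 k k] by (simp add: lessThan_atLeast0 add.commute)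
  finally show ?thesis .
qed

definition row_sign :: "nat \<Rightarrow> nat \<Rightarrow> real" where
  "row_sign k j = (if j < k then 1 else -1)"

definition slope :: "real \<Rightarrow> nat \<Rightarrow> (nat \<Rightarrow> real) \<Rightarrow> (nat \<Rightarrow> real) \<Rightarrow> real" where
  "slope \<alpha> d w x = (if ip d w x \<ge> 0 then 1 else \<alpha>)"

lemma row_sign_square: "row_sign k j * row_sign k j = 1"
  unfolding row_sign_def by simp

lemma slope_bounds: "0 < \<alpha> \<Longrightarrow> \<alpha> \<le> 1 \<Longrightarrow> \<alpha> \<le> slope \<alpha> d w x \<and> slope \<alpha> d w x \<le> 1"
  unfolding slope_def by auto

lemma slope_mult_eq_leaky: "\<alpha> \<le> 1 \<Longrightarrow> slope \<alpha> d w x * ip d w x = leaky \<alpha> (ip d w x)"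
proof (cases "ip d w x \<ge> 0")
  case True
  moreover assume "\<alpha> \<le> 1"
  ultimately have "\<alpha> * ip d w x \<le> ip d w x" using mult_right_mono[of \<alpha> 1 "ip d w x"] by simp
  with True show ?thesis unfolding slope_def leaky_def by simp
next
  case False
  moreover assume "\<alpha> \<le> 1"
  ultimately have "ip d w x \<le> \<alpha> * ip d w x" using mult_right_mono_neg[of \<alpha> 1 "ip d w x"] by simp
  with False show ?thesis unfolding slope_def leaky_def by simp
qed

lemma net_eq_sum_rows: "net \<alpha> d k v W x = (\<Sum>j<2*k. row_sign k j * v * leaky \<alpha> (ip d (W j) x))"
  unfolding net_def sum_lessThan_double row_sign_def by (simp add: sum_negf)

lemma sgd_step_inactive: "y * net \<alpha> d k v W x \<ge> 1 \<Longrightarrow> sgd_step \<alpha> d k v \<eta> W (x, y) = W"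
  unfolding sgd_step_def by simp

lemma sgd_step_active_row:
  "\<not> y * net \<alpha> d k v W x \<ge> 1 \<Longrightarrow> j < 2*k \<Longrightarrow>
   sgd_step \<alpha> d k v \<eta> W (x, y) j = (\<lambda>i. W j i + (row_sign k j * \<eta> * v * slope \<alpha> d (W j) x * y) * x i)"
  unfolding sgd_step_def row_sign_def slope_def Let_def by (auto simp: algebra_simps)

definition alignment :: "nat \<Rightarrow> nat \<Rightarrow> (nat \<Rightarrow> nat \<Rightarrow> real) \<Rightarrow> (nat \<Rightarrow> real) \<Rightarrow> real" where
  "alignment d k W w = (\<Sum>j<2*k. row_sign k j * ip d (W j) w)"

definition sq_norm_rows :: "nat \<Rightarrow> nat \<Rightarrow> (nat \<Rightarrow> nat \<Rightarrow> real) \<Rightarrow> real" where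
  "sq_norm_rows d k W = (\<Sum>j<2*k. ip d (W j) (W j))"

lemma alignment_sgd_step_ge:
  assumes \<alpha>: "0 < \<alpha>" "\<alpha> \<le> 1" and "0 \<le> \<eta>" "0 \<le> v"
    and margin: "y * ip d w x \<ge> 1" and active: "\<not> y * net \<alpha> d k v W x \<ge> 1"
  shows "alignment d k W w + 2 * real k * \<eta> * v * \<alpha> \<le> alignment d k (sgd_step \<alpha> d k v \<eta> W (x, y)) w"
proof -
  have "alignment d k (sgd_step \<alpha> d k v \<eta> W (x, y)) w
      = (\<Sum>j<2*k. row_sign k j * ip d (W j) w + \<eta> * v * slope \<alpha> d (W j) x * (y * ip d w x))"
    unfolding alignment_def
    by (intro sum.cong refl)
       (simp add: sgd_step_active_row[OF active] ip_add_scaled_left ip_commute row_sign_def)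
  also have "\<dots> = alignment d k W w + (\<Sum>j<2*k. \<eta> * v * slope \<alpha> d (W j) x * (y * ip d w x))"
    unfolding alignment_def by (simp add: sum.distrib)
  finally have eq: "alignment d k (sgd_step \<alpha> d k v \<eta> W (x, y)) w = \<dots>" .
  have "\<eta> * v * \<alpha> \<le> \<eta> * v * slope \<alpha> d (W j) x * (y * ip d w x)" for j
  proof -
    have slope: "\<alpha> \<le> slope \<alpha> d (W j) x" using slope_bounds[OF \<alpha>] by blast
    have "0 \<le> \<eta> * v" using assms by simp
    hence "\<eta> * v * \<alpha> \<le> \<eta> * v * slope \<alpha> d (W j) x" using slope by (intro mult_left_mono)
    also have "\<dots> \<le> \<eta> * v * slope \<alpha> d (W j) x * (y * ip d w x)"
      using mult_left_mono[OF margin, of "\<eta> * v * slope \<alpha> d (W j) x"] \<open>0 \<le> \<eta> * v\<close> slope \<alpha>(1)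
      by simp
    finally show ?thesis .
  qed
  hence "(\<Sum>j<2*k. \<eta> * v * \<alpha>) \<le> (\<Sum>j<2*k. \<eta> * v * slope \<alpha> d (W j) x * (y * ip d w x))"
    by (intro sum_mono)
  thus ?thesis unfolding eq by simp
qed

lemma sq_norm_rows_sgd_step_le:
  assumes \<alpha>: "0 < \<alpha>" "\<alpha> \<le> 1" and \<eta>: "0 \<le> \<eta>"
    and y: "y \<in> {-1, 1}" and x: "vnorm d x \<le> 1" and active: "\<not> y * net \<alpha> d k v W x \<ge> 1"
  shows "sq_norm_rows d k (sgd_step \<alpha> d k v \<eta> W (x, y)) \<le> sq_norm_rows d k W + 2 * \<eta> + 2 * real k * \<eta>\<^sup>2 * v\<^sup>2"
proof -
  let ?c = "\<lambda>j. row_sign k j * \<eta> * v * slope \<alpha> d (W j) x * y"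
  have "sq_norm_rows d k (sgd_step \<alpha> d k v \<eta> W (x, y)) =
     (\<Sum>j<2*k. ip d (W j) (W j) + 2 * ?c j * ip d (W j) x + (?c j)\<^sup>2 * ip d x x)"
    unfolding sq_norm_rows_def
    by (intro sum.cong refl) (simp add: sgd_step_active_row[OF active] ip_add_scaled_self)
  also have "\<dots> = sq_norm_rows d k W + 2 * (\<Sum>j<2*k. ?c j * ip d (W j) x) + (\<Sum>j<2*k. (?c j)\<^sup>2 * ip d x x)"
    unfolding sq_norm_rows_def by (simp add: sum.distrib sum_distrib_left mult.assoc)
  also have "(\<Sum>j<2*k. ?c j * ip d (W j) x) = \<eta> * (y * net \<alpha> d k v W x)"
    unfolding net_eq_sum_rows sum_distrib_left
    by (intro sum.cong refl) (simp add: slope_mult_eq_leaky[symmetric] \<alpha>(2) algebra_simps)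
  also have "(\<Sum>j<2*k. (?c j)\<^sup>2 * ip d x x) \<le> (\<Sum>j<2*k. \<eta>\<^sup>2 * v\<^sup>2)"
  proof (rule sum_mono)
    fix j
    have "(?c j)\<^sup>2 = \<eta>\<^sup>2 * v\<^sup>2 * (slope \<alpha> d (W j) x)\<^sup>2 * (row_sign k j * row_sign k j) * (y * y)"
      by (simp add: power2_eq_square algebra_simps)
    also have "\<dots> = \<eta>\<^sup>2 * v\<^sup>2 * (slope \<alpha> d (W j) x)\<^sup>2"
      using y by (auto simp: row_sign_square)
    finally have c: "(?c j)\<^sup>2 = \<eta>\<^sup>2 * v\<^sup>2 * (slope \<alpha> d (W j) x)\<^sup>2" .
    have "(slope \<alpha> d (W j) x)\<^sup>2 \<le> 1"
      using slope_bounds[OF \<alpha>, of d "W j" x] \<alpha> by (simp add: power_le_one)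
    moreover have "ip d x x \<le> 1"
      using x vnorm_nonneg[of d x] by (simp add: vnorm_square[symmetric] power_le_one)
    ultimately have "(slope \<alpha> d (W j) x)\<^sup>2 * ip d x x \<le> 1"
      using ip_self_nonneg[of d x] by (simp add: mult_le_one)
    thus "(?c j)\<^sup>2 * ip d x x \<le> \<eta>\<^sup>2 * v\<^sup>2"
      unfolding c using mult_left_mono[of _ 1 "\<eta>\<^sup>2 * v\<^sup>2"] by (simp add: mult.assoc)
  qed
  finally have "sq_norm_rows d k (sgd_step \<alpha> d k v \<eta> W (x, y))
      \<le> sq_norm_rows d k W + 2 * (\<eta> * (y * net \<alpha> d k v W x)) + 2 * real k * \<eta>\<^sup>2 * v\<^sup>2"
    by simp
  moreover have "\<eta> * (y * net \<alpha> d k v W x) \<le> \<eta>"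
    using active \<eta> mult_left_mono[of "y * net \<alpha> d k v W x" 1 \<eta>] by simp
  ultimately show ?thesis by linarith
qed

lemma abs_alignment_le: "\<bar>alignment d k W w\<bar> \<le> vnorm d w * sqrt (2 * real k) * sqrt (sq_norm_rows d k W)"
proof -
  have "\<bar>alignment d k W w\<bar> \<le> (\<Sum>j<2*k. 1 * vnorm d (W j)) * vnorm d w"
    unfolding alignment_def sum_distrib_right
    by (rule order_trans[OF sum_abs sum_mono]) (simp add: row_sign_def abs_ip_le_vnorm)
  also have "(\<Sum>j<2*k. 1 * vnorm d (W j)) \<le> sqrt (\<Sum>j<2*k. 1\<^sup>2) * sqrt (\<Sum>j<2*k. (vnorm d (W j))\<^sup>2)"
    using real_sqrt_le_mono[OF Cauchy_Schwarz_ineq_sum[of "\<lambda>_. 1" "\<lambda>j. vnorm d (W j)" "{..<2*k}"]]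
    by (simp add: real_sqrt_mult)
  also have "(\<Sum>j<2*k. (vnorm d (W j))\<^sup>2) = sq_norm_rows d k W"
    unfolding sq_norm_rows_def vnorm_square ..
  finally show ?thesis
    using vnorm_nonneg[of d w] by (simp add: mult_right_mono mult.commute mult.left_commute)
qed

lemma sq_norm_rows_le_one:
  assumes "k \<ge> 1" and "\<forall>j < 2 * k. vnorm d (W j) \<le> 1 / sqrt (2 * real k)"
  shows "sq_norm_rows d k W \<le> 1"
proof -
  have "sq_norm_rows d k W = (\<Sum>j<2*k. (vnorm d (W j))\<^sup>2)"
    unfolding sq_norm_rows_def vnorm_square ..
  also have "\<dots> \<le> (\<Sum>j<2*k. (1 / sqrt (2 * real k))\<^sup>2)"
    using assms(2) vnorm_nonneg by (intro sum_mono power_mono) auto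
  also have "\<dots> = 1" using assms(1) by (simp add: power_divide)
  finally show ?thesis .
qed

lemma card_lessThan_Suc_filter:
  "card {s. s < Suc t \<and> P s} = card {s. s < t \<and> P s} + (if P t then 1 else 0)"
proof -
  have "{s. s < Suc t \<and> P s} = {s. s < t \<and> P s} \<union> (if P t then {t} else {})"
    by (auto simp: less_Suc_eq)
  thus ?thesis by (auto simp: card_insert_if)
qed

lemma potential_le_card_updates:
  fixes X :: "nat \<Rightarrow> 'a" and \<Phi> :: "'a \<Rightarrow> real"
  assumes "\<And>t. P t \<Longrightarrow> \<Phi> (X (Suc t)) \<le> \<Phi> (X t) + c"
    and "\<And>t. \<not> P t \<Longrightarrow> X (Suc t) = X t"
  shows "\<Phi> (X t) \<le> \<Phi> (X 0) + real (card {s. s < t \<and> P s}) * c"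
proof (induction t)
  case (Suc t)
  then show ?case
    using assms[of t] by (cases "P t") (auto simp: card_lessThan_Suc_filter algebra_simps)
qed simp

lemma sgd_Suc_inactive:
  "\<not> nonzero_update \<alpha> d k v \<eta> S idx W0 t \<Longrightarrow> sgd \<alpha> d k v \<eta> S idx W0 (Suc t) = sgd \<alpha> d k v \<eta> S idx W0 t"
  unfolding nonzero_update_def
  by (cases "S ! idx t") (simp add: sgd_step_inactive)

lemma sgd_Suc_active:
  assumes "nonzero_update \<alpha> d k v \<eta> S idx W0 t" and "S ! idx t = (x, y)"
  shows "\<not> y * net \<alpha> d k v (sgd \<alpha> d k v \<eta> S idx W0 t) x \<ge> 1"
    and "sgd \<alpha> d k v \<eta> S idx W0 (Suc t) = sgd_step \<alpha> d k v \<eta> (sgd \<alpha> d k v \<eta> S idx W0 t) (x, y)"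
  using assms unfolding nonzero_update_def by simp_all

lemma alignment_sgd_ge:
  assumes \<alpha>: "0 < \<alpha>" "\<alpha> \<le> 1" and "0 \<le> \<eta>" "0 \<le> v"
    and margin: "\<forall>(x, y) \<in> set S. y * ip d w x \<ge> 1" and idx: "\<forall>t. idx t < length S"
  shows "alignment d k W0 w + real (card {s. s < t \<and> nonzero_update \<alpha> d k v \<eta> S idx W0 s}) * (2 * real k * \<eta> * v * \<alpha>)
    \<le> alignment d k (sgd \<alpha> d k v \<eta> S idx W0 t) w"
proof -
  have "- alignment d k (sgd \<alpha> d k v \<eta> S idx W0 t) w \<le> - alignment d k (sgd \<alpha> d k v \<eta> S idx W0 0) w
      + real (card {s. s < t \<and> nonzero_update \<alpha> d k v \<eta> S idx W0 s}) * - (2 * real k * \<eta> * v * \<alpha>)"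
  proof (rule potential_le_card_updates[where \<Phi> = "\<lambda>W. - alignment d k W w"])
    fix s assume nz: "nonzero_update \<alpha> d k v \<eta> S idx W0 s"
    obtain x y where xy: "S ! idx s = (x, y)" by (cases "S ! idx s")
    have "y * ip d w x \<ge> 1" using margin nth_mem[OF idx[rule_format, of s]] xy by auto
    with assms sgd_Suc_active[OF nz xy]
    show "- alignment d k (sgd \<alpha> d k v \<eta> S idx W0 (Suc s)) w
        \<le> - alignment d k (sgd \<alpha> d k v \<eta> S idx W0 s) w + - (2 * real k * \<eta> * v * \<alpha>)"
      using alignment_sgd_step_ge[of \<alpha> \<eta> v y d w x k "sgd \<alpha> d k v \<eta> S idx W0 s"] by simp
  qed (rule sgd_Suc_inactive)
  thus ?thesis by simp
qed

lemma sq_norm_rows_sgd_le: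
  assumes \<alpha>: "0 < \<alpha>" "\<alpha> \<le> 1" and "0 \<le> \<eta>"
    and examples: "\<forall>(x, y) \<in> set S. vnorm d x \<le> 1 \<and> y \<in> {-1, 1}" and idx: "\<forall>t. idx t < length S"
  shows "sq_norm_rows d k (sgd \<alpha> d k v \<eta> S idx W0 t)
    \<le> sq_norm_rows d k W0 + real (card {s. s < t \<and> nonzero_update \<alpha> d k v \<eta> S idx W0 s}) * (2 * \<eta> + 2 * real k * \<eta>\<^sup>2 * v\<^sup>2)"
proof -
  have "sq_norm_rows d k (sgd \<alpha> d k v \<eta> S idx W0 t) \<le> sq_norm_rows d k (sgd \<alpha> d k v \<eta> S idx W0 0)
      + real (card {s. s < t \<and> nonzero_update \<alpha> d k v \<eta> S idx W0 s}) * (2 * \<eta> + 2 * real k * \<eta>\<^sup>2 * v\<^sup>2)"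
  proof (rule potential_le_card_updates[where \<Phi> = "sq_norm_rows d k"])
    fix s assume nz: "nonzero_update \<alpha> d k v \<eta> S idx W0 s"
    obtain x y where xy: "S ! idx s = (x, y)" by (cases "S ! idx s")
    have "vnorm d x \<le> 1" "y \<in> {-1, 1}" using examples nth_mem[OF idx[rule_format, of s]] xy by auto
    with assms sgd_Suc_active[OF nz xy]
    show "sq_norm_rows d k (sgd \<alpha> d k v \<eta> S idx W0 (Suc s))
        \<le> sq_norm_rows d k (sgd \<alpha> d k v \<eta> S idx W0 s) + (2 * \<eta> + 2 * real k * \<eta>\<^sup>2 * v\<^sup>2)"
      using sq_norm_rows_sgd_step_le[of \<alpha> \<eta> y d x k v "sgd \<alpha> d k v \<eta> S idx W0 s"] by simp
  qed (rule sgd_Suc_inactive)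
  thus ?thesis by simp
qed

lemma separating_vnorm_ge_1:
  assumes "vnorm d x \<le> 1" and "y \<in> {-1, 1}" and "y * ip d w x \<ge> 1"
  shows "vnorm d w \<ge> 1"
proof -
  have "1 \<le> \<bar>ip d w x\<bar>" using assms(2,3) by (auto simp: abs_mult)
  also have "\<dots> \<le> vnorm d w * vnorm d x" by (rule abs_ip_le_vnorm)
  also have "\<dots> \<le> vnorm d w" using assms(1) vnorm_nonneg[of d w] by (simp add: mult_left_le)
  finally show ?thesis .
qed

lemma perceptron_count_bound:
  fixes a \<eta> \<alpha> M :: real
  assumes a: "a \<ge> 1" and \<eta>: "\<eta> > 0" and \<alpha>: "0 < \<alpha>" and M: "M \<ge> 0"
    and h: "M * \<eta> * \<alpha> - a \<le> a * sqrt (1 + M * (2 * \<eta> + \<eta>\<^sup>2))"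
  shows "M \<le> a\<^sup>2 / \<alpha>\<^sup>2 + (2 / \<alpha> + 2 / \<alpha>\<^sup>2) * a\<^sup>2 / \<eta>"
proof (cases "M * \<eta> * \<alpha> \<le> a")
  case True
  have aa: "a \<le> a\<^sup>2" using a by (simp add: power2_eq_square)
  from True have "M \<le> a / (\<eta> * \<alpha>)" using \<eta> \<alpha> by (simp add: pos_le_divide_eq mult.assoc)
  also have "\<dots> \<le> a\<^sup>2 / (\<eta> * \<alpha>)" using aa \<eta> \<alpha> by (simp add: divide_right_mono)
  also have "\<dots> \<le> (2 / \<alpha> + 2 / \<alpha>\<^sup>2) * a\<^sup>2 / \<eta>" using \<alpha> \<eta> by (simp add: field_simps power2_eq_square)
  finally show ?thesis by (simp add: add_increasing)
next
  case False
  have aa: "a \<le> a\<^sup>2" using a by (simp add: power2_eq_square)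
  have Mpos: "M > 0" using False a M by (cases "M = 0") auto
  have "(M * \<eta> * \<alpha> - a)\<^sup>2 \<le> (a * sqrt (1 + M * (2 * \<eta> + \<eta>\<^sup>2)))\<^sup>2"
    using h False by (intro power_mono) auto
  also have "\<dots> = a\<^sup>2 * (1 + M * (2 * \<eta> + \<eta>\<^sup>2))"
    using M \<eta> by (simp add: power_mult_distrib)
  finally have "M * (M * \<eta>\<^sup>2 * \<alpha>\<^sup>2) \<le> M * (2 * \<eta> * \<alpha> * a + a\<^sup>2 * (2 * \<eta> + \<eta>\<^sup>2))"
    by (simp add: power2_eq_square algebra_simps)
  hence "M * (\<eta>\<^sup>2 * \<alpha>\<^sup>2) \<le> 2 * \<eta> * \<alpha> * a + a\<^sup>2 * (2 * \<eta> + \<eta>\<^sup>2)"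
    using Mpos by (simp add: mult.assoc)
  hence "M \<le> (2 * \<eta> * \<alpha> * a + a\<^sup>2 * (2 * \<eta> + \<eta>\<^sup>2)) / (\<eta>\<^sup>2 * \<alpha>\<^sup>2)"
    using \<eta> \<alpha> by (simp add: pos_le_divide_eq)
  also have "\<dots> = a\<^sup>2 / \<alpha>\<^sup>2 + (2 * a / \<alpha> + 2 * a\<^sup>2 / \<alpha>\<^sup>2) / \<eta>"
    using \<eta> \<alpha> by (simp add: field_simps power2_eq_square)
  also have "\<dots> \<le> a\<^sup>2 / \<alpha>\<^sup>2 + (2 / \<alpha> + 2 / \<alpha>\<^sup>2) * a\<^sup>2 / \<eta>"
    using aa \<alpha> \<eta> by (intro add_left_mono divide_right_mono) (auto simp: algebra_simps divide_right_mono)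
  finally show ?thesis .
qed

lemma card_nonzero_updates_le:
  assumes \<alpha>: "0 < \<alpha>" "\<alpha> < 1" and \<eta>: "\<eta> > 0" and k: "k \<ge> 1"
    and S: "\<forall>(x, y) \<in> set S. vnorm d x \<le> 1 \<and> y \<in> {-1, 1} \<and> y * ip d w x \<ge> 1"
    and W0: "\<forall>j < 2 * k. vnorm d (W0 j) \<le> 1 / sqrt (2 * real k)"
    and idx: "\<forall>t. idx t < length S"
  shows "real (card {s. s < t \<and> nonzero_update \<alpha> d k (1 / sqrt (2 * real k)) \<eta> S idx W0 s})
           \<le> (vnorm d w)\<^sup>2 / \<alpha>\<^sup>2 + (2 / \<alpha> + 2 / \<alpha>\<^sup>2) * (vnorm d w)\<^sup>2 / \<eta>"
proof -
  define r where "r = sqrt (2 * real k)"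
  define v where "v = 1 / r"
  let ?W = "sgd \<alpha> d k v \<eta> S idx W0 t"
  define M where "M = real (card {s. s < t \<and> nonzero_update \<alpha> d k v \<eta> S idx W0 s})"
  define a where "a = vnorm d w"
  have r: "r > 0" "2 * real k * v = r" "2 * real k * v\<^sup>2 = 1"
    using k by (simp_all add: r_def v_def power_divide real_div_sqrt)
  have a: "a \<ge> 1"
  proof -
    obtain x y where "(x, y) \<in> set S" using nth_mem[OF idx[rule_format, of 0]] by (metis surj_pair)
    with S show ?thesis unfolding a_def by (auto intro: separating_vnorm_ge_1)
  qed
  have "0 \<le> v" and margin: "\<forall>(x, y) \<in> set S. y * ip d w x \<ge> 1"
    using r(1) S by (auto simp: v_def)
  from alignment_sgd_ge[OF \<alpha>(1) less_imp_le[OF \<alpha>(2)] less_imp_le[OF \<eta>] this idx, of k W0 t]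
  have "alignment d k W0 w + M * (\<eta> * \<alpha> * r) \<le> alignment d k ?W w"
    unfolding M_def by (simp add: r(2)[symmetric] algebra_simps)
  moreover have G0: "sq_norm_rows d k W0 \<le> 1"
    using sq_norm_rows_le_one[OF k W0] .
  moreover have G: "sq_norm_rows d k ?W \<le> 1 + M * (2 * \<eta> + \<eta>\<^sup>2)"
  proof -
    have "\<forall>(x, y) \<in> set S. vnorm d x \<le> 1 \<and> y \<in> {-1, 1}" using S by auto
    from sq_norm_rows_sgd_le[OF \<alpha>(1) less_imp_le[OF \<alpha>(2)] less_imp_le[OF \<eta>] this idx, of k v W0 t]
    have "sq_norm_rows d k ?W \<le> sq_norm_rows d k W0 + M * (2 * \<eta> + (2 * real k * v\<^sup>2) * \<eta>\<^sup>2)"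
      unfolding M_def by (simp add: mult_ac)
    with G0 show ?thesis unfolding r(3) by simp
  qed
  moreover have "0 \<le> a * r" using a r(1) by simp
  ultimately have "(M * \<eta> * \<alpha>) * r \<le> (a * sqrt (1 + M * (2 * \<eta> + \<eta>\<^sup>2)) + a) * r"
    using abs_alignment_le[of d k ?W w] abs_alignment_le[of d k W0 w]
      mult_left_mono[OF real_sqrt_le_mono[OF G], of "a * r"]
      mult_left_mono[of "sqrt (sq_norm_rows d k W0)" 1 "a * r"]
    unfolding a_def r_def by (simp add: algebra_simps abs_le_iff)
  hence "M * \<eta> * \<alpha> - a \<le> a * sqrt (1 + M * (2 * \<eta> + \<eta>\<^sup>2))"
    using r(1) by (simp only: mult_le_cancel_right_pos)
  from perceptron_count_bound[OF a \<eta> \<alpha>(1) _ this]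
  show ?thesis unfolding M_def a_def v_def r_def by simp
qed

lemma eventually_not_if_card_bounded:
  fixes P :: "nat \<Rightarrow> bool"
  assumes bounded: "\<And>t. real (card {s. s < t \<and> P s}) \<le> B"
  shows "\<exists>T. \<forall>t\<ge>T. \<not> P t"
proof -
  have "finite {s. P s}"
  proof (rule ccontr)
    assume "infinite {s. P s}"
    then obtain F where F: "finite F" "card F = Suc (nat \<lceil>B\<rceil>)" "F \<subseteq> {s. P s}"
      using infinite_arbitrarily_large by blast
    hence "F \<subseteq> {s. s < Suc (Max F) \<and> P s}" by (auto simp: le_imp_less_Suc)
    hence "card F \<le> card {s. s < Suc (Max F) \<and> P s}" by (intro card_mono) auto
    hence "real (Suc (nat \<lceil>B\<rceil>)) \<le> B" using bounded[of "Suc (Max F)"] F(2) by linarith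
    thus False by linarith
  qed
  then obtain m where m: "\<forall>s\<in>{s. P s}. s \<le> m" using finite_nat_set_iff_bounded_le by blast
  have "\<not> P t" if "m < t" for t using m that by auto
  thus ?thesis by (intro exI[of _ "Suc m"]) auto
qed

lemma sgd_stationary:
  assumes "\<And>t. T \<le> t \<Longrightarrow> \<not> nonzero_update \<alpha> d k v \<eta> S idx W0 t" and "T \<le> t"
  shows "sgd \<alpha> d k v \<eta> S idx W0 t = sgd \<alpha> d k v \<eta> S idx W0 T"
  using assms(2)
proof (induction t rule: dec_induct)
  case (step n)
  with assms(1) have "\<not> nonzero_update \<alpha> d k v \<eta> S idx W0 n" by simp
  then have "sgd \<alpha> d k v \<eta> S idx W0 (Suc n) = sgd \<alpha> d k v \<eta> S idx W0 n"
    by (rule sgd_Suc_inactive)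
  then show ?case using step(3) by (rule trans)
qed simp

lemma loss_sgd_stationary_eq_0:
  assumes stationary: "\<And>t. T \<le> t \<Longrightarrow> \<not> nonzero_update \<alpha> d k v \<eta> S idx W0 t"
    and visits: "\<forall>i < length S. \<forall>T. \<exists>t\<ge>T. idx t = i"
  shows "loss \<alpha> d k v S (sgd \<alpha> d k v \<eta> S idx W0 T) = 0"
proof -
  let ?W = "sgd \<alpha> d k v \<eta> S idx W0 T"
  have "1 \<le> y * net \<alpha> d k v ?W x" if example: "(x, y) \<in> set S" for x y
  proof -
    obtain i where i: "i < length S" "S ! i = (x, y)"
      using example by (auto simp: in_set_conv_nth)
    then obtain t where t: "T \<le> t" "idx t = i" using visits by blast
    have "\<not> nonzero_update \<alpha> d k v \<eta> S idx W0 t" using stationary t(1) .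
    hence "\<not> y * net \<alpha> d k v (sgd \<alpha> d k v \<eta> S idx W0 t) x < 1"
      unfolding nonzero_update_def t(2) i(2) by simp
    thus ?thesis using sgd_stationary[OF stationary t(1)] by (simp only: not_less)
  qed
  hence "map (\<lambda>(x, y). max (1 - y * net \<alpha> d k v ?W x) 0) S = map (\<lambda>_. 0) S"
    by (intro map_cong) auto
  hence "(\<Sum>(x, y) \<leftarrow> S. max (1 - y * net \<alpha> d k v ?W x) 0) = (\<Sum>_ \<leftarrow> S. 0)"
    by (rule arg_cong)
  thus ?thesis unfolding loss_def by simp
qed

lemma sgd_reaches_zero_loss:
  assumes bounded: "\<And>t. real (card {s. s < t \<and> nonzero_update \<alpha> d k v \<eta> S idx W0 s}) \<le> B"
    and visits: "\<forall>i < length S. \<forall>T. \<exists>t\<ge>T. idx t = i"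
  shows "\<exists>T. \<forall>t\<ge>T. sgd \<alpha> d k v \<eta> S idx W0 t = sgd \<alpha> d k v \<eta> S idx W0 T
               \<and> loss \<alpha> d k v S (sgd \<alpha> d k v \<eta> S idx W0 T) = 0"
proof -
  obtain T where stationary: "\<And>t. T \<le> t \<Longrightarrow> \<not> nonzero_update \<alpha> d k v \<eta> S idx W0 t"
    using eventually_not_if_card_bounded[OF bounded] by blast
  have "sgd \<alpha> d k v \<eta> S idx W0 t = sgd \<alpha> d k v \<eta> S idx W0 T
        \<and> loss \<alpha> d k v S (sgd \<alpha> d k v \<eta> S idx W0 T) = 0" if "T \<le> t" for t
    using sgd_stationary[OF stationary that] loss_sgd_stationary_eq_0[OF stationary visits] ..
  thus ?thesis by blast
qed

theorem corollary1:
  fixes \<alpha> :: real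
  assumes "0 < \<alpha>" and "\<alpha> < 1"
  shows "\<exists>C>0. \<forall>(d::nat) (k::nat) (S :: ((nat \<Rightarrow> real) \<times> real) list) (wstar :: nat \<Rightarrow> real)
            (\<eta>::real) (W0 :: nat \<Rightarrow> nat \<Rightarrow> real) (idx :: nat \<Rightarrow> nat).
     k \<ge> 1 \<and> \<eta> > 0
     \<and> (\<forall>(x, y) \<in> set S. vnorm d x \<le> 1 \<and> y \<in> {-1, 1} \<and> y * ip d wstar x \<ge> 1)
     \<and> (\<forall>j < 2 * k. vnorm d (W0 j) \<le> 1 / sqrt (2 * real k))
     \<and> (\<forall>t. idx t < length S)
     \<longrightarrow>
       (\<forall>t. real (card {s. s < t \<and> nonzero_update \<alpha> d k (1 / sqrt (2 * real k)) \<eta> S idx W0 s})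
              \<le> (vnorm d wstar)\<^sup>2 / \<alpha>\<^sup>2 + C * (vnorm d wstar)\<^sup>2 / min \<eta> (sqrt \<eta>))
     \<and> ((\<forall>i < length S. \<forall>T. \<exists>t\<ge>T. idx t = i) \<longrightarrow>
          (\<exists>T. \<forall>t\<ge>T. sgd \<alpha> d k (1 / sqrt (2 * real k)) \<eta> S idx W0 t
                         = sgd \<alpha> d k (1 / sqrt (2 * real k)) \<eta> S idx W0 T
                \<and> loss \<alpha> d k (1 / sqrt (2 * real k)) S (sgd \<alpha> d k (1 / sqrt (2 * real k)) \<eta> S idx W0 T) = 0))"
proof (intro exI[of _ "2 / \<alpha> + 2 / \<alpha>\<^sup>2"] conjI allI impI)
  show "0 < 2 / \<alpha> + 2 / \<alpha>\<^sup>2" using assms by (intro add_pos_pos divide_pos_pos) auto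
  fix d k :: nat and S :: "((nat \<Rightarrow> real) \<times> real) list" and wstar :: "nat \<Rightarrow> real"
    and \<eta> :: real and W0 :: "nat \<Rightarrow> nat \<Rightarrow> real" and idx :: "nat \<Rightarrow> nat" and t :: nat
  assume hyps: "k \<ge> 1 \<and> \<eta> > 0
     \<and> (\<forall>(x, y) \<in> set S. vnorm d x \<le> 1 \<and> y \<in> {-1, 1} \<and> y * ip d wstar x \<ge> 1)
     \<and> (\<forall>j < 2 * k. vnorm d (W0 j) \<le> 1 / sqrt (2 * real k))
     \<and> (\<forall>t. idx t < length S)"
  then have \<eta>: "\<eta> > 0" and k: "k \<ge> 1"
    and S: "\<forall>(x, y) \<in> set S. vnorm d x \<le> 1 \<and> y \<in> {-1, 1} \<and> y * ip d wstar x \<ge> 1"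
    and W0: "\<forall>j < 2 * k. vnorm d (W0 j) \<le> 1 / sqrt (2 * real k)"
    and idx: "\<forall>t. idx t < length S"
    by auto
  have "(2 / \<alpha> + 2 / \<alpha>\<^sup>2) * (vnorm d wstar)\<^sup>2 / \<eta>
      \<le> (2 / \<alpha> + 2 / \<alpha>\<^sup>2) * (vnorm d wstar)\<^sup>2 / min \<eta> (sqrt \<eta>)"
    using assms \<eta> by (intro divide_left_mono) auto
  note bound = order_trans[OF card_nonzero_updates_le[OF assms \<eta> k S W0 idx] add_left_mono[OF this]]
  show "real (card {s. s < t \<and> nonzero_update \<alpha> d k (1 / sqrt (2 * real k)) \<eta> S idx W0 s})
      \<le> (vnorm d wstar)\<^sup>2 / \<alpha>\<^sup>2 + (2 / \<alpha> + 2 / \<alpha>\<^sup>2) * (vnorm d wstar)\<^sup>2 / min \<eta> (sqrt \<eta>)"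
    by (rule bound)
  assume visits: "\<forall>i < length S. \<forall>T. \<exists>t\<ge>T. idx t = i"
  show "\<exists>T. \<forall>t\<ge>T. sgd \<alpha> d k (1 / sqrt (2 * real k)) \<eta> S idx W0 t
                         = sgd \<alpha> d k (1 / sqrt (2 * real k)) \<eta> S idx W0 T
                \<and> loss \<alpha> d k (1 / sqrt (2 * real k)) S (sgd \<alpha> d k (1 / sqrt (2 * real k)) \<eta> S idx W0 T) = 0"
    by (rule sgd_reaches_zero_loss[OF bound visits])
qed

end
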